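(* Let $\mathcal{H}$ be a complex separable Hilbert space and $\mathcal{E}(\mathcal{H})$ its set of effects. The function $\mathcal{S}_1:\mathcal{E}(\mathcal{H})\to\mathbb{R}$, $$\mathcal{S}_1(A):=\bigl(\|A\|+\|I-A\|-1\bigr)-\bigl(\|A(I-A)\|+\|I-A(I-A)\|-1\bigr),$$ satisfies the requirements (S1)–(S6), i.e. it is a sharpness measure.
   Context: An effect is a selfadjoint bounded operator $A$ on $\mathcal{H}$ with $\mathbb{O}\le A\le I$; $A':=I-A$. An effect is trivial if $A=\lambda I$, $\lambda\in[0,1]$; a nontrivial projection is a projection other than $\mathbb{O},I$. Norms are operator norms. Requirements for $\mathcal{S}:\mathcal{E}(\mathcal{H})\to\mathbb{R}$: (S1) $0\le\mathcal{S}(A)\le1$; (S2) $\mathcal{S}(A)=0$ iff $A$ is trivial; (S3) $\mathcal{S}(A)=1$ iff $A$ is a nontrivial projection; (S4) $\mathcal{S}(A')=\mathcal{S}(A)$; (S5) $\mathcal{S}(CAC^{-1})=\mathcal{S}(A)$ for every invertible bounded $C$ such that $CAC^{-1}$ is an effect; (S6) $A\mapsto\mathcal{S}(A)$ is operator-norm continuous. *)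

theory Defs
  imports "HOL-Analysis.Analysis"
begin

class complex_vector = real_vector +
  fixes cscale :: "complex \<Rightarrow> 'a \<Rightarrow> 'a"
  assumes cscale_add_right: "cscale a (x + y) = cscale a x + cscale a y"
    and cscale_add_left: "cscale (a + b) x = cscale a x + cscale b x"
    and cscale_cscale: "cscale a (cscale b x) = cscale (a * b) x"
    and cscale_one: "cscale 1 x = x"
    and scaleR_cscale: "scaleR r x = cscale (complex_of_real r) x"

class complex_inner = complex_vector + real_normed_vector +
  fixes cinner :: "'a \<Rightarrow> 'a \<Rightarrow> complex"
  assumes cinner_commute: "cinner x y = cnj (cinner y x)"
    and cinner_add_left: "cinner (x + y) z = cinner x z + cinner y z"
    and cinner_cscale_left: "cinner (cscale r x) y = cnj r * cinner x y"
    and cinner_real_nonneg: "Im (cinner x x) = 0 \<and> Re (cinner x x) \<ge> 0"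
    and cinner_eq_zero_iff: "cinner x x = 0 \<longleftrightarrow> x = 0"
    and norm_eq_sqrt_cinner: "norm x = sqrt (Re (cinner x x))"

class chilbert_space = complex_inner + complete_space

definition separable_hilbert :: "'a::chilbert_space itself \<Rightarrow> bool" where
  "separable_hilbert _ \<longleftrightarrow> separable_space (euclidean :: 'a topology)"

text \<open>Bounded (complex-)linear operators on H are the bounded (real-)linear
  maps that commute with complex scalar multiplication. The norm of
  blinfun is the operator norm.\<close>
definition bounded_op :: "('a::chilbert_space \<Rightarrow>\<^sub>L 'a) \<Rightarrow> bool" where
  "bounded_op A \<longleftrightarrow> (\<forall>c x. blinfun_apply A (cscale c x) = cscale c (blinfun_apply A x))"

definition selfadjoint :: "('a::chilbert_space \<Rightarrow>\<^sub>L 'a) \<Rightarrow> bool" where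
  "selfadjoint A \<longleftrightarrow> bounded_op A \<and>
     (\<forall>x y. cinner (blinfun_apply A x) y = cinner x (blinfun_apply A y))"

definition op_le :: "('a::chilbert_space \<Rightarrow>\<^sub>L 'a) \<Rightarrow> ('a \<Rightarrow>\<^sub>L 'a) \<Rightarrow> bool" where
  "op_le A B \<longleftrightarrow> (\<forall>x. Re (cinner x (blinfun_apply A x)) \<le> Re (cinner x (blinfun_apply B x)))"

definition effects :: "('a::chilbert_space \<Rightarrow>\<^sub>L 'a) set" where
  "effects = {A. selfadjoint A \<and> op_le 0 A \<and> op_le A id_blinfun}"

definition trivial_effect :: "('a::chilbert_space \<Rightarrow>\<^sub>L 'a) \<Rightarrow> bool" where
  "trivial_effect A \<longleftrightarrow> (\<exists>l::real. 0 \<le> l \<and> l \<le> 1 \<and> A = l *\<^sub>R id_blinfun)"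

definition projection :: "('a::chilbert_space \<Rightarrow>\<^sub>L 'a) \<Rightarrow> bool" where
  "projection P \<longleftrightarrow> selfadjoint P \<and> P o\<^sub>L P = P"

definition nontrivial_projection :: "('a::chilbert_space \<Rightarrow>\<^sub>L 'a) \<Rightarrow> bool" where
  "nontrivial_projection P \<longleftrightarrow> projection P \<and> P \<noteq> 0 \<and> P \<noteq> id_blinfun"

definition invertible_op :: "('a::chilbert_space \<Rightarrow>\<^sub>L 'a) \<Rightarrow> bool" where
  "invertible_op C \<longleftrightarrow> bounded_op C \<and>
     (\<exists>D. bounded_op D \<and> C o\<^sub>L D = id_blinfun \<and> D o\<^sub>L C = id_blinfun)"

definition op_inverse :: "('a::chilbert_space \<Rightarrow>\<^sub>L 'a) \<Rightarrow> ('a \<Rightarrow>\<^sub>L 'a)" where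
  "op_inverse C = (THE D. bounded_op D \<and> C o\<^sub>L D = id_blinfun \<and> D o\<^sub>L C = id_blinfun)"

definition sharpness_measure :: "(('a::chilbert_space \<Rightarrow>\<^sub>L 'a) \<Rightarrow> real) \<Rightarrow> bool" where
  "sharpness_measure S \<longleftrightarrow>
     (\<forall>A\<in>effects. 0 \<le> S A \<and> S A \<le> 1) \<and>
     (\<forall>A\<in>effects. S A = 0 \<longleftrightarrow> trivial_effect A) \<and>
     (\<forall>A\<in>effects. S A = 1 \<longleftrightarrow> nontrivial_projection A) \<and>
     (\<forall>A\<in>effects. S (id_blinfun - A) = S A) \<and>
     (\<forall>A\<in>effects. \<forall>C. invertible_op C \<and> C o\<^sub>L A o\<^sub>L op_inverse C \<in> effects \<longrightarrow>
         S (C o\<^sub>L A o\<^sub>L op_inverse C) = S A) \<and>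
     continuous_on effects S"

definition S1 :: "('a::chilbert_space \<Rightarrow>\<^sub>L 'a) \<Rightarrow> real" where
  "S1 A = (norm A + norm (id_blinfun - A) - 1)
          - (norm (A o\<^sub>L (id_blinfun - A)) + norm (id_blinfun - (A o\<^sub>L (id_blinfun - A))) - 1)"

end

theory Submission
  imports Defs
begin

text \<open>Let A be an effect, m = 1 - \<parallel>I - A\<parallel> and M = \<parallel>A\<parallel>, the ends of the numerical range of A,
  and f(t) = t (1 - t). At a unit vector x the form of A(I - A) equals t - \<parallel>A x\<parallel>^2, where
  t = Re \<langle>x, A x\<rangle> \<in> [m, M]; Cauchy--Schwarz and the positivity of (A - m)(M - A) squeeze it between
  min (f m) (f M) and max f on [m, M]. Hence \<parallel>A(I - A)\<parallel> + \<parallel>I - A(I - A)\<parallel> - 1 is at most the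
  oscillation of f on [m, M], while S1(A) is M - m minus that quantity. As f is 1-Lipschitz on
  [0, 1], strictly on nondegenerate intervals, S1(A) \<ge> 0 with equality only if m = M, i.e.
  A = m I; and \<parallel>A(I - A)\<parallel> + \<parallel>I - A(I - A)\<parallel> \<ge> \<parallel>I\<parallel> = 1 gives S1(A) \<le> M - m \<le> 1, with equality only
  if m = 0, M = 1 and A(I - A) = 0. Similarity invariance holds because the norm of a selfadjoint
  operator X is its spectral radius lim \<parallel>X^(2^k)\<parallel>^(1/2^k).\<close>

section \<open>The parabola t (1 - t)\<close>

definition parabola :: "real \<Rightarrow> real" where "parabola t = t * (1 - t)"
definition parabola_argmax :: "real \<Rightarrow> real \<Rightarrow> real" where
  "parabola_argmax m M = max m (min M (1/2))"

lemma parabola_le_argmax: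
  assumes "m \<le> t" "t \<le> M"
  shows "parabola t \<le> parabola (parabola_argmax m M)"
proof -
  have "parabola (parabola_argmax m M) - parabola t
        = (parabola_argmax m M - t) * (1 - parabola_argmax m M - t)"
    by (simp add: parabola_def algebra_simps)
  also have "\<dots> \<ge> 0"
    using assms unfolding parabola_argmax_def
    by (cases "t \<le> 1/2"; cases "M \<le> 1/2"; cases "m \<le> 1/2")
      (auto intro: mult_nonneg_nonneg mult_nonpos_nonpos)
  finally show ?thesis by simp
qed

lemma parabola_le_quarter: "parabola t \<le> 1/4"
  using zero_le_power2[of "t - 1/2"] by (simp add: parabola_def power2_eq_square algebra_simps)

lemma parabola_nonneg: "0 \<le> t \<Longrightarrow> t \<le> 1 \<Longrightarrow> 0 \<le> parabola t"
  by (simp add: parabola_def)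

lemma parabola_diff_eq: "parabola b - parabola a = (b - a) * (1 - a - b)"
  by (simp add: parabola_def algebra_simps)

lemma parabola_Lipschitz:
  assumes "0 \<le> a" "a \<le> b" "b \<le> 1"
  shows "\<bar>parabola b - parabola a\<bar> \<le> b - a"
proof -
  have "\<bar>1 - a - b\<bar> \<le> 1" using assms by linarith
  then show ?thesis
    unfolding parabola_diff_eq abs_mult using assms by (simp add: mult_left_le)
qed

lemma parabola_strict_Lipschitz:
  assumes "0 \<le> a" "a < b" "b \<le> 1"
  shows "\<bar>parabola b - parabola a\<bar> < b - a"
proof -
  have "\<bar>1 - a - b\<bar> < 1" using assms by linarith
  then show ?thesis
    unfolding parabola_diff_eq abs_mult using assms by simp
qed

lemma parabola_oscillation_le:
  assumes "0 \<le> m" "m \<le> M" "M \<le> 1"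
  shows "parabola (parabola_argmax m M) - min (parabola m) (parabola M) \<le> M - m"
proof -
  define T where "T = parabola_argmax m M"
  have "m \<le> T" "T \<le> M" using assms by (auto simp: T_def parabola_argmax_def)
  then have "\<bar>parabola T - parabola m\<bar> \<le> T - m" "\<bar>parabola M - parabola T\<bar> \<le> M - T"
    using assms by (intro parabola_Lipschitz; linarith)+
  then show ?thesis unfolding T_def[symmetric] by linarith
qed

lemma parabola_oscillation_less:
  assumes "0 \<le> m" "m < M" "M \<le> 1"
  shows "parabola (parabola_argmax m M) - min (parabola m) (parabola M) < M - m"
proof -
  define T where "T = parabola_argmax m M"
  have T: "m \<le> T" "T \<le> M" using assms by (auto simp: T_def parabola_argmax_def)
  have "parabola T - parabola m < M - m"
  proof (cases "m = T")
    case False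
    then have "\<bar>parabola T - parabola m\<bar> < T - m" using T assms by (intro parabola_strict_Lipschitz) auto
    then show ?thesis using T by linarith
  qed (use assms in simp)
  moreover have "parabola T - parabola M < M - m"
  proof (cases "T = M")
    case False
    then have "\<bar>parabola M - parabola T\<bar> < M - T" using T assms by (intro parabola_strict_Lipschitz) auto
    then show ?thesis using T by linarith
  qed (use assms in simp)
  ultimately show ?thesis unfolding T_def[symmetric] by linarith
qed

text \<open>The next two lemmas are applied with n = \<parallel>x\<parallel>^2, a = Re \<langle>x, A x\<rangle> and s = \<parallel>A x\<parallel>^2.\<close>
lemma diff_le_parabola_argmax_mult:
  fixes n a s :: real
  assumes "0 < n" "m * n \<le> a" "a \<le> M * n" "a\<^sup>2 \<le> n * s"
  shows "a - s \<le> parabola (parabola_argmax m M) * n"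
proof -
  define t where "t = a / n"
  have a: "a = t * n" using assms by (simp add: t_def)
  have "m \<le> t" "t \<le> M" using assms by (auto simp: t_def field_simps)
  then have "parabola t * n \<le> parabola (parabola_argmax m M) * n"
    using assms by (simp add: parabola_le_argmax)
  moreover have "t\<^sup>2 * n \<le> s" using assms a by (simp add: power2_eq_square algebra_simps)
  ultimately show ?thesis using a by (simp add: parabola_def power2_eq_square algebra_simps)
qed

lemma min_parabola_mult_le_diff:
  fixes n a s :: real
  assumes "0 < n" "m * n \<le> a" "a \<le> M * n" "s \<le> (M + m) * a - m * M * n"
  shows "min (parabola m) (parabola M) * n \<le> a - s"
proof -
  have "min (parabola m) (parabola M) * n \<le> (1 - M - m) * a + m * M * n"
  proof (cases "1 - M - m \<ge> 0")
    case True
    then have "(1 - M - m) * (m * n) \<le> (1 - M - m) * a" using assms by (intro mult_left_mono)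
    moreover have "min (parabola m) (parabola M) * n \<le> parabola m * n" using assms by simp
    ultimately show ?thesis by (simp add: parabola_def algebra_simps)
  next
    case False
    then have "(1 - M - m) * (M * n) \<le> (1 - M - m) * a" using assms by (simp add: mult_left_mono_neg)
    moreover have "min (parabola m) (parabola M) * n \<le> parabola M * n" using assms by simp
    ultimately show ?thesis by (simp add: parabola_def algebra_simps)
  qed
  then show ?thesis using assms by (simp add: algebra_simps)
qed

section \<open>Real part of the inner product\<close>

lemma cinner_diff_left: "cinner (x - y) z = cinner x z - cinner y z"
  using cinner_add_left[of "x - y" y z] by simp

lemma cinner_diff_right: "cinner z (x - y) = cinner z x - cinner z y"
  by (metis cinner_commute cinner_diff_left complex_cnj_diff)

lemma cinner_scaleR_left: "cinner (r *\<^sub>R x) z = complex_of_real r * cinner x z"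
  by (simp add: scaleR_cscale cinner_cscale_left)

lemma cinner_scaleR_right: "cinner z (r *\<^sub>R x) = complex_of_real r * cinner z x"
  by (metis cinner_commute cinner_scaleR_left complex_cnj_mult complex_cnj_complex_of_real)

lemma cinner_zero_right: "cinner z 0 = 0"
  using cinner_add_left[of 0 0 z] cinner_commute[of z 0] by simp

lemma cscale_diff_right: "cscale c (x - y) = cscale c x - cscale c y"
  using cscale_add_right[of c "x - y" y] by simp

definition rinner :: "'a::complex_inner \<Rightarrow> 'a \<Rightarrow> real" where
  "rinner x y = Re (cinner x y)"

lemma rinner_add_left: "rinner (x + y) z = rinner x z + rinner y z"
  by (simp add: rinner_def cinner_add_left)

lemma rinner_scaleR_left: "rinner (r *\<^sub>R x) y = r * rinner x y"
  by (simp add: rinner_def scaleR_cscale cinner_cscale_left)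

lemma rinner_commute: "rinner x y = rinner y x"
  unfolding rinner_def by (subst cinner_commute) simp

lemma power2_norm_eq_rinner: "(norm x)\<^sup>2 = rinner x x"
  using cinner_real_nonneg[of x] by (simp add: norm_eq_sqrt_cinner rinner_def)

lemma rinner_scaleR_right: "rinner y (r *\<^sub>R x) = r * rinner y x"
  by (metis rinner_commute rinner_scaleR_left)

lemma rinner_diff_left: "rinner (x - y) z = rinner x z - rinner y z"
  using rinner_add_left[of "x - y" y z] by simp

lemma rinner_diff_right: "rinner z (x - y) = rinner z x - rinner z y"
  by (metis rinner_commute rinner_diff_left)

lemma symmetric_form_Cauchy_Schwarz:
  fixes b :: "'a::real_vector \<Rightarrow> 'a \<Rightarrow> real"
  assumes add: "\<And>x y z. b (x + y) z = b x z + b y z"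
    and scale: "\<And>r x y. b (r *\<^sub>R x) y = r * b x y"
    and sym: "\<And>x y. b x y = b y x"
    and pos: "\<And>x. 0 \<le> b x x"
  shows "(b x y)\<^sup>2 \<le> b x x * b y y"
proof -
  have expand: "b (x + t *\<^sub>R y) (x + t *\<^sub>R y) = b x x + 2 * t * b x y + t\<^sup>2 * b y y" for t
  proof -
    have addr: "b z (u + v) = b z u + b z v" for z u v using add sym by metis
    have scaler: "b z (r *\<^sub>R u) = r * b z u" for z r u using scale sym by metis
    show ?thesis by (simp add: add addr scale scaler sym[of y x] power2_eq_square algebra_simps)
  qed
  have discr: "0 \<le> b x x + 2 * t * b x y + t\<^sup>2 * b y y" for t
    using pos[of "x + t *\<^sub>R y"] expand by simp
  show ?thesis
  proof (cases "b y y = 0")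
    case True
    have "b x y = 0"
    proof (rule ccontr)
      assume "b x y \<noteq> 0"
      then have "b x x + 2 * (- (b x x + 1) / (2 * b x y)) * b x y = -1" by (simp add: field_simps)
      then show False using discr[of "- (b x x + 1) / (2 * b x y)"] True by simp
    qed
    then show ?thesis using True by simp
  next
    case False
    then have yy: "0 < b y y" using pos[of y] by simp
    have "0 \<le> b x x + 2 * (- b x y / b y y) * b x y + (- b x y / b y y)\<^sup>2 * b y y"
      by (rule discr)
    also have "\<dots> = b x x - (b x y)\<^sup>2 / b y y"
      using yy by (simp add: field_simps power2_eq_square)
    finally show ?thesis using yy by (simp add: field_simps)
  qed
qed

lemma rinner_Cauchy_Schwarz: "\<bar>rinner x y\<bar> \<le> norm x * norm y"
proof -
  have "(rinner x y)\<^sup>2 \<le> rinner x x * rinner y y"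
    by (rule symmetric_form_Cauchy_Schwarz, rule rinner_add_left, rule rinner_scaleR_left,
        rule rinner_commute, simp flip: power2_norm_eq_rinner)
  also have "\<dots> = (norm x * norm y)\<^sup>2" by (simp add: power2_norm_eq_rinner power_mult_distrib)
  finally show ?thesis by (simp add: power2_le_iff_abs_le)
qed

section \<open>Operators and quadratic forms\<close>

lemma norm_id_blinfun_nontrivial:
  assumes "(x::'a::real_normed_vector) \<noteq> 0"
  shows "norm (id_blinfun :: 'a \<Rightarrow>\<^sub>L 'a) = 1"
proof -
  have "1 * norm x \<le> norm (id_blinfun :: 'a \<Rightarrow>\<^sub>L 'a) * norm x"
    using norm_blinfun[of "id_blinfun :: 'a \<Rightarrow>\<^sub>L 'a" x] by simp
  then have "1 \<le> norm (id_blinfun :: 'a \<Rightarrow>\<^sub>L 'a)"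
    by (rule mult_right_le_imp_le) (use assms in simp)
  then show ?thesis using norm_blinfun_id_le[where 'a = 'a] by linarith
qed

lemma blinfun_trivial_domain:
  assumes "\<And>x::'a::real_normed_vector. x = 0"
  shows "(T :: 'a \<Rightarrow>\<^sub>L 'b::real_normed_vector) = 0"
proof (rule blinfun_eqI)
  fix x :: 'a
  show "T x = blinfun_apply 0 x" using assms[of x] by simp
qed

lemma norm_add_norm_complement_ge_one:
  assumes "(x::'a::real_normed_vector) \<noteq> 0"
  shows "1 \<le> norm (T :: 'a \<Rightarrow>\<^sub>L 'a) + norm (id_blinfun - T)"
  using norm_triangle_ineq[of T "id_blinfun - T"] norm_id_blinfun_nontrivial[OF assms] by simp

lemma norm_idempotent:
  assumes "P o\<^sub>L P = P" "P \<noteq> 0" "norm P \<le> 1"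
  shows "norm P = 1"
proof -
  have "norm P * 1 \<le> norm P * norm P" using norm_blinfun_compose[of P P] assms(1) by simp
  then have "1 \<le> norm P" by (rule mult_left_le_imp_le) (use assms(2) in simp)
  then show ?thesis using assms(3) by linarith
qed

definition hermitian :: "('a::complex_inner \<Rightarrow>\<^sub>L 'a) \<Rightarrow> bool" where
  "hermitian T \<longleftrightarrow> (\<forall>x y. cinner (T x) y = cinner x (T y))"

definition qform :: "('a::complex_inner \<Rightarrow>\<^sub>L 'a) \<Rightarrow> 'a \<Rightarrow> real" where
  "qform T x = rinner x (T x)"

lemma hermitian_rinner: "hermitian T \<Longrightarrow> rinner (T x) y = rinner x (T y)"
  by (simp add: hermitian_def rinner_def)

lemma hermitian_diff: "hermitian S \<Longrightarrow> hermitian T \<Longrightarrow> hermitian (S - T)"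
  by (simp add: hermitian_def blinfun.diff_left cinner_diff_left cinner_diff_right)

lemma hermitian_id: "hermitian id_blinfun"
  by (simp add: hermitian_def)

lemma hermitian_scaleR: "hermitian T \<Longrightarrow> hermitian (r *\<^sub>R T)"
  by (simp add: hermitian_def blinfun.scaleR_left cinner_scaleR_left cinner_scaleR_right)

lemma hermitian_compose_self: "hermitian T \<Longrightarrow> hermitian (T o\<^sub>L T)"
  by (simp add: hermitian_def)

lemma qform_zero [simp]: "qform T 0 = 0"
  by (simp add: qform_def rinner_def cinner_zero_right)

lemma qform_diff: "qform (S - T) x = qform S x - qform T x"
  by (simp add: qform_def blinfun.diff_left rinner_diff_right)

lemma qform_id: "qform id_blinfun x = (norm x)\<^sup>2"
  by (simp add: qform_def power2_norm_eq_rinner)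

lemma qform_scaleR: "qform (r *\<^sub>R T) x = r * qform T x"
  by (simp add: qform_def blinfun.scaleR_left rinner_scaleR_right)

lemma qform_compose_self: "hermitian T \<Longrightarrow> qform (T o\<^sub>L T) x = (norm (T x))\<^sup>2"
  by (simp add: qform_def power2_norm_eq_rinner hermitian_rinner[symmetric])

lemma qform_le_norm: "qform T x \<le> norm T * (norm x)\<^sup>2"
proof -
  have "qform T x \<le> norm x * norm (T x)"
    unfolding qform_def using rinner_Cauchy_Schwarz[of x "T x"] by linarith
  also have "\<dots> \<le> norm x * (norm T * norm x)" by (simp add: mult_left_mono norm_blinfun)
  finally show ?thesis by (simp add: power2_eq_square algebra_simps)
qed

lemma qform_ge_norm_complement: "(1 - norm (id_blinfun - T)) * (norm x)\<^sup>2 \<le> qform T x"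
  using qform_le_norm[of "id_blinfun - T" x] by (simp add: qform_diff qform_id algebra_simps)

text \<open>Cauchy--Schwarz for the positive form (x, y) \<mapsto> Re \<langle>x, T y\<rangle> gives
  \<parallel>T x\<parallel>^4 = Re \<langle>x, T (T x)\<rangle>^2 \<le> Re \<langle>x, T x\<rangle> Re \<langle>T x, T (T x)\<rangle>.\<close>
lemma positive_hermitian_norm_apply_le:
  assumes T: "hermitian T" and pos: "\<And>x. 0 \<le> qform T x"
    and bound: "\<And>x. qform T x \<le> c * (norm x)\<^sup>2" and "0 \<le> c"
  shows "(norm (T x))\<^sup>2 \<le> c * qform T x"
proof (cases "T x = 0")
  case False
  have "(rinner x (T (T x)))\<^sup>2 \<le> rinner x (T x) * rinner (T x) (T (T x))"
  proof (rule symmetric_form_Cauchy_Schwarz[where b = "\<lambda>u v. rinner u (T v)"])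
    show "rinner u (T v) = rinner v (T u)" for u v
      by (metis hermitian_rinner[OF T] rinner_commute)
    show "0 \<le> rinner u (T u)" for u using pos[of u] by (simp add: qform_def)
  qed (simp_all add: rinner_add_left rinner_scaleR_left)
  moreover have "(norm (T x))\<^sup>2 = rinner x (T (T x))"
    by (simp add: power2_norm_eq_rinner hermitian_rinner[OF T])
  ultimately have "(norm (T x))\<^sup>2 * (norm (T x))\<^sup>2 \<le> qform T x * qform T (T x)"
    by (simp add: qform_def power2_eq_square)
  also have "\<dots> \<le> qform T x * (c * (norm (T x))\<^sup>2)" by (rule mult_left_mono[OF bound pos])
  finally have "(norm (T x))\<^sup>2 * (norm (T x))\<^sup>2 \<le> (c * qform T x) * (norm (T x))\<^sup>2"
    by (simp only: ac_simps)
  then show ?thesis by (rule mult_right_le_imp_le) (use False in simp)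
qed (use assms in simp)

lemma norm_le_if_qform_le:
  assumes T: "hermitian T" and pos: "\<And>x. 0 \<le> qform T x"
    and bound: "\<And>x. qform T x \<le> c * (norm x)\<^sup>2" and c: "0 \<le> c"
  shows "norm T \<le> c"
proof (rule norm_blinfun_bound[OF c])
  fix x
  have "(norm (T x))\<^sup>2 \<le> c * qform T x" by (rule positive_hermitian_norm_apply_le[OF assms])
  also have "\<dots> \<le> c * (c * (norm x)\<^sup>2)" by (rule mult_left_mono[OF bound c])
  also have "\<dots> = (c * norm x)\<^sup>2" by (simp add: power2_eq_square)
  finally show "norm (T x) \<le> c * norm x" using c by (simp add: power2_le_iff_abs_le)
qed

lemma hermitian_eq_scaleR_id:
  assumes "hermitian T" and "\<And>x. qform T x = c * (norm x)\<^sup>2"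
  shows "T = c *\<^sub>R id_blinfun"
proof -
  have "norm (T - c *\<^sub>R id_blinfun) \<le> 0"
    by (rule norm_le_if_qform_le)
      (simp_all add: assms hermitian_diff hermitian_scaleR hermitian_id qform_diff qform_scaleR qform_id)
  then show ?thesis by simp
qed

text \<open>This is the positivity of (A - m)(M - A).\<close>
lemma hermitian_norm_apply_square_le:
  assumes A: "hermitian A"
    and lower: "\<And>x. m * (norm x)\<^sup>2 \<le> qform A x" and upper: "\<And>x. qform A x \<le> M * (norm x)\<^sup>2"
    and "m \<le> M"
  shows "(norm (A x))\<^sup>2 \<le> (M + m) * qform A x - m * M * (norm x)\<^sup>2"
proof -
  define T where "T = A - m *\<^sub>R id_blinfun"
  have qT: "qform T y = qform A y - m * (norm y)\<^sup>2" for y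
    by (simp add: T_def qform_diff qform_scaleR qform_id)
  have "(norm (T x))\<^sup>2 \<le> (M - m) * qform T x"
  proof (rule positive_hermitian_norm_apply_le)
    show "hermitian T" unfolding T_def by (intro hermitian_diff hermitian_scaleR hermitian_id A)
    show "0 \<le> qform T y" for y using qT[of y] lower[of y] by linarith
    show "qform T y \<le> (M - m) * (norm y)\<^sup>2" for y using qT[of y] upper[of y] by (simp add: algebra_simps)
  qed (use \<open>m \<le> M\<close> in simp)
  moreover have "(norm (T x))\<^sup>2 = (norm (A x))\<^sup>2 - 2 * m * qform A x + m\<^sup>2 * (norm x)\<^sup>2"
  proof -
    have "(norm (T x))\<^sup>2 = rinner (A x - m *\<^sub>R x) (A x - m *\<^sub>R x)"
      by (simp add: T_def power2_norm_eq_rinner blinfun.diff_left blinfun.scaleR_left)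
    also have "\<dots> = rinner (A x) (A x) - 2 * m * rinner x (A x) + m\<^sup>2 * rinner x x"
      by (simp add: rinner_diff_left rinner_diff_right rinner_scaleR_left rinner_scaleR_right
          rinner_commute[of "A x" x] power2_eq_square algebra_simps)
    finally show ?thesis by (simp add: qform_def power2_norm_eq_rinner)
  qed
  ultimately show ?thesis unfolding qT by (simp add: power2_eq_square algebra_simps)
qed

lemma norm_compose_self_hermitian:
  assumes "hermitian X"
  shows "norm (X o\<^sub>L X) = (norm X)\<^sup>2"
proof (rule order_antisym)
  show "norm (X o\<^sub>L X) \<le> (norm X)\<^sup>2" using norm_blinfun_compose[of X X] by (simp add: power2_eq_square)
  have "norm X \<le> sqrt (norm (X o\<^sub>L X))"
  proof (rule norm_blinfun_bound)
    fix x
    have "(norm (X x))\<^sup>2 \<le> norm (X o\<^sub>L X) * (norm x)\<^sup>2"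
      using qform_le_norm[of "X o\<^sub>L X" x] by (simp add: qform_compose_self[OF assms])
    then have "norm (X x) \<le> sqrt (norm (X o\<^sub>L X) * (norm x)\<^sup>2)" by (rule real_le_rsqrt)
    then show "norm (X x) \<le> sqrt (norm (X o\<^sub>L X)) * norm x" by (simp add: real_sqrt_mult)
  qed simp
  then show "(norm X)\<^sup>2 \<le> norm (X o\<^sub>L X)"
    by (metis norm_ge_zero power_mono real_sqrt_pow2)
qed

section \<open>Similarity invariance of the norm of a hermitian operator\<close>

lemma funpow_square_hermitian:
  "hermitian X \<Longrightarrow> hermitian (((\<lambda>Y. Y o\<^sub>L Y) ^^ k) X)"
  by (induction k) (simp_all add: hermitian_compose_self)

lemma norm_funpow_square_hermitian:
  "hermitian X \<Longrightarrow> norm (((\<lambda>Y. Y o\<^sub>L Y) ^^ k) X) = norm X ^ 2 ^ k"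
  by (induction k)
    (simp_all add: norm_compose_self_hermitian funpow_square_hermitian power_mult[symmetric] mult.commute)

lemma funpow_square_conjugate:
  assumes "D o\<^sub>L C = id_blinfun"
  shows "((\<lambda>Y. Y o\<^sub>L Y) ^^ k) (C o\<^sub>L X o\<^sub>L D) = C o\<^sub>L ((\<lambda>Y. Y o\<^sub>L Y) ^^ k) X o\<^sub>L D"
proof (induction k)
  case (Suc k)
  have "D (C y) = y" for y using arg_cong[OF assms, of "\<lambda>F. F y"] by simp
  then show ?case by (simp add: Suc) (rule blinfun_eqI, simp)
qed simp

lemma le_if_power_two_power_le_mult:
  fixes a b K :: real
  assumes "0 \<le> b" and bound: "\<And>k. a ^ 2 ^ k \<le> K * b ^ 2 ^ k"
  shows "a \<le> b"
proof (rule ccontr)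
  assume "\<not> a \<le> b"
  then have "0 < a" "b < a" using \<open>0 \<le> b\<close> by auto
  define r where "r = b / a"
  have r: "0 \<le> r" "r < 1" using \<open>0 < a\<close> \<open>b < a\<close> \<open>0 \<le> b\<close> by (auto simp: r_def)
  have "a \<le> K * b" using bound[of 0] by simp
  then have "0 < K * b" using \<open>0 < a\<close> by linarith
  then have "0 \<le> K" using \<open>0 \<le> b\<close> by (auto simp: zero_less_mult_iff)
  have lower: "1 \<le> K * r ^ k" for k
  proof -
    have "1 \<le> K * r ^ 2 ^ k"
      using bound[of k] \<open>0 < a\<close> by (simp add: r_def power_divide field_simps)
    also have "\<dots> \<le> K * r ^ k"
      using r \<open>0 \<le> K\<close> less_exp[of k] by (intro mult_left_mono power_decreasing) auto
    finally show ?thesis .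
  qed
  have "(\<lambda>k. K * r ^ k) \<longlonglongrightarrow> 0"
    by (intro tendsto_mult_right_zero LIMSEQ_realpow_zero r)
  then have "\<forall>\<^sub>F k in sequentially. K * r ^ k < 1"
    by (rule order_tendstoD) simp
  then obtain k where "K * r ^ k < 1" by (auto simp: eventually_sequentially)
  with lower show False by (meson not_le)
qed

text \<open>The norm of a hermitian operator is its spectral radius, since the norms of its
  iterated squares are the powers of its norm; so it is invariant under similarity.\<close>
lemma hermitian_similar_norm_le:
  assumes X: "hermitian X" and Y: "hermitian (C o\<^sub>L X o\<^sub>L D)" and DC: "D o\<^sub>L C = id_blinfun"
  shows "norm (C o\<^sub>L X o\<^sub>L D) \<le> norm X"
proof (rule le_if_power_two_power_le_mult[where K = "norm C * norm D"])
  fix k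
  have "norm (C o\<^sub>L X o\<^sub>L D) ^ 2 ^ k = norm (C o\<^sub>L ((\<lambda>Y. Y o\<^sub>L Y) ^^ k) X o\<^sub>L D)"
    using norm_funpow_square_hermitian[OF Y, of k] by (simp add: funpow_square_conjugate[OF DC])
  also have "\<dots> \<le> norm C * norm (((\<lambda>Y. Y o\<^sub>L Y) ^^ k) X) * norm D"
    by (meson norm_blinfun_compose order_trans mult_right_mono norm_ge_zero)
  also have "\<dots> = norm C * norm D * norm X ^ 2 ^ k"
    by (simp add: norm_funpow_square_hermitian[OF X])
  finally show "norm (C o\<^sub>L X o\<^sub>L D) ^ 2 ^ k \<le> norm C * norm D * norm X ^ 2 ^ k" .
qed simp

lemma hermitian_similar_norm_eq:
  assumes X: "hermitian X" and Y: "hermitian (C o\<^sub>L X o\<^sub>L D)"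
    and CD: "C o\<^sub>L D = id_blinfun" and DC: "D o\<^sub>L C = id_blinfun"
  shows "norm (C o\<^sub>L X o\<^sub>L D) = norm X"
proof -
  have "D (C y) = y" for y using arg_cong[OF DC, of "\<lambda>F. F y"] by simp
  then have "D o\<^sub>L (C o\<^sub>L X o\<^sub>L D) o\<^sub>L C = X" by (intro blinfun_eqI) simp
  then have "norm X \<le> norm (C o\<^sub>L X o\<^sub>L D)"
    using hermitian_similar_norm_le[OF Y _ CD] X by metis
  then show ?thesis using hermitian_similar_norm_le[OF X Y DC] by simp
qed

section \<open>Effects and their unsharpness A(I - A)\<close>

lemma effects_hermitian: "A \<in> effects \<Longrightarrow> hermitian A"
  by (simp add: effects_def selfadjoint_def hermitian_def)

lemma effects_qform_nonneg: "A \<in> effects \<Longrightarrow> 0 \<le> qform A x"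
  by (simp add: effects_def op_le_def qform_def rinner_def cinner_zero_right)

lemma effects_qform_le: "A \<in> effects \<Longrightarrow> qform A x \<le> (norm x)\<^sup>2"
  by (simp add: effects_def op_le_def qform_def rinner_def power2_norm_eq_rinner)

lemma effects_complement: "A \<in> effects \<Longrightarrow> id_blinfun - A \<in> effects"
  by (auto simp: effects_def selfadjoint_def bounded_op_def op_le_def blinfun.diff_left
      cinner_diff_left cinner_diff_right cinner_zero_right cscale_diff_right)

lemma effects_norm_le_one: "A \<in> effects \<Longrightarrow> norm A \<le> 1"
  by (rule norm_le_if_qform_le) (simp_all add: effects_hermitian effects_qform_nonneg effects_qform_le)

lemma unsharpness_eq: "A o\<^sub>L (id_blinfun - A) = A - (A o\<^sub>L A)"
  by (rule blinfun_eqI) (simp add: blinfun.diff_left blinfun.diff_right)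

lemma hermitian_unsharpness: "hermitian A \<Longrightarrow> hermitian (A o\<^sub>L (id_blinfun - A))"
  by (simp add: unsharpness_eq hermitian_diff hermitian_compose_self)

lemma qform_unsharpness:
  "hermitian A \<Longrightarrow> qform (A o\<^sub>L (id_blinfun - A)) x = qform A x - (norm (A x))\<^sup>2"
  by (simp add: unsharpness_eq qform_diff qform_compose_self)

lemma effect_unsharpness_qform_bounds:
  fixes A :: "'a::chilbert_space \<Rightarrow>\<^sub>L 'a"
  assumes A: "A \<in> effects"
  defines "m \<equiv> 1 - norm (id_blinfun - A)" and "M \<equiv> norm A"
  shows "0 \<le> qform (A o\<^sub>L (id_blinfun - A)) x"
    and "qform (A o\<^sub>L (id_blinfun - A)) x \<le> parabola (parabola_argmax m M) * (norm x)\<^sup>2"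
    and "min (parabola m) (parabola M) * (norm x)\<^sup>2 \<le> qform (A o\<^sub>L (id_blinfun - A)) x"
proof -
  have hA: "hermitian A" by (rule effects_hermitian[OF A])
  have lower: "m * (norm y)\<^sup>2 \<le> qform A y" and upper: "qform A y \<le> M * (norm y)\<^sup>2" for y
    unfolding m_def M_def by (rule qform_ge_norm_complement, rule qform_le_norm)
  have "(norm (A x))\<^sup>2 \<le> 1 * qform A x"
    by (rule positive_hermitian_norm_apply_le) (simp_all add: hA A effects_qform_nonneg effects_qform_le)
  then show "0 \<le> qform (A o\<^sub>L (id_blinfun - A)) x" by (simp add: qform_unsharpness[OF hA])
  show "qform (A o\<^sub>L (id_blinfun - A)) x \<le> parabola (parabola_argmax m M) * (norm x)\<^sup>2"
  proof (cases "x = 0")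
    case False
    have "\<bar>qform A x\<bar> \<le> norm x * norm (A x)" unfolding qform_def by (rule rinner_Cauchy_Schwarz)
    then have "(qform A x)\<^sup>2 \<le> (norm x)\<^sup>2 * (norm (A x))\<^sup>2"
      by (metis abs_ge_zero power2_abs power_mono power_mult_distrib)
    then show ?thesis unfolding qform_unsharpness[OF hA]
      by (intro diff_le_parabola_argmax_mult) (use False lower upper in auto)
  qed simp
  show "min (parabola m) (parabola M) * (norm x)\<^sup>2 \<le> qform (A o\<^sub>L (id_blinfun - A)) x"
  proof (cases "x = 0")
    case False
    have "m * (norm x)\<^sup>2 \<le> M * (norm x)\<^sup>2" using lower upper order_trans by blast
    then have "m \<le> M" using False by simp
    then show ?thesis unfolding qform_unsharpness[OF hA]
      by (intro min_parabola_mult_le_diff hermitian_norm_apply_square_le[OF hA lower upper])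
        (use False lower upper in auto)
  qed simp
qed

lemma effect_unsharpness_norm_le:
  fixes A :: "'a::chilbert_space \<Rightarrow>\<^sub>L 'a"
  assumes A: "A \<in> effects"
  defines "m \<equiv> 1 - norm (id_blinfun - A)" and "M \<equiv> norm A"
  shows "norm (A o\<^sub>L (id_blinfun - A)) \<le> parabola (parabola_argmax m M)"
    and "norm (id_blinfun - (A o\<^sub>L (id_blinfun - A))) \<le> 1 - min (parabola m) (parabola M)"
proof -
  note bounds = effect_unsharpness_qform_bounds[OF A, folded m_def M_def]
  have hB: "hermitian (A o\<^sub>L (id_blinfun - A))" by (rule hermitian_unsharpness[OF effects_hermitian[OF A]])
  have m: "0 \<le> m" "m \<le> 1" and M: "0 \<le> M" "M \<le> 1"
    using effects_norm_le_one[OF A] effects_norm_le_one[OF effects_complement[OF A]]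
    by (simp_all add: m_def M_def)
  have "0 \<le> parabola (parabola_argmax m M)"
    using m M by (intro parabola_nonneg) (auto simp: parabola_argmax_def)
  then show "norm (A o\<^sub>L (id_blinfun - A)) \<le> parabola (parabola_argmax m M)"
    by (rule norm_le_if_qform_le[OF hB bounds(1,2)])
  have "qform (A o\<^sub>L (id_blinfun - A)) x \<le> (norm x)\<^sup>2" for x
  proof -
    have "parabola (parabola_argmax m M) * (norm x)\<^sup>2 \<le> 1 * (norm x)\<^sup>2"
      using parabola_le_quarter[of "parabola_argmax m M"] by (intro mult_right_mono) auto
    then show ?thesis using bounds(2)[of x] by linarith
  qed
  then show "norm (id_blinfun - (A o\<^sub>L (id_blinfun - A))) \<le> 1 - min (parabola m) (parabola M)"
    using bounds(3) parabola_le_quarter[of m]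
    by (intro norm_le_if_qform_le) (auto simp: hermitian_diff hermitian_id hB qform_diff qform_id algebra_simps)
qed

text \<open>With p = \<parallel>A(I - A)\<parallel>, the norm condition gives p \<parallel>x\<parallel>^2 \<le> Re \<langle>x, A(I - A) x\<rangle> \<le> Re \<langle>x, A x\<rangle>,
  hence \<parallel>I - A\<parallel> \<le> 1 - p.\<close>
lemma effect_unsharpness_eq_0:
  fixes A :: "'a::chilbert_space \<Rightarrow>\<^sub>L 'a"
  assumes A: "A \<in> effects" and complement: "norm (id_blinfun - A) = 1"
    and sum: "norm (A o\<^sub>L (id_blinfun - A)) + norm (id_blinfun - (A o\<^sub>L (id_blinfun - A))) \<le> 1"
  shows "A o\<^sub>L (id_blinfun - A) = 0"
proof -
  define p where "p = norm (A o\<^sub>L (id_blinfun - A))"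
  have qA: "qform (id_blinfun - A) x \<le> (1 - p) * (norm x)\<^sup>2" for x
  proof -
    have "p * (norm x)\<^sup>2 \<le> (1 - norm (id_blinfun - (A o\<^sub>L (id_blinfun - A)))) * (norm x)\<^sup>2"
      using sum by (intro mult_right_mono) (auto simp: p_def)
    also have "\<dots> \<le> qform (A o\<^sub>L (id_blinfun - A)) x" by (rule qform_ge_norm_complement)
    also have "\<dots> \<le> qform A x" by (simp add: qform_unsharpness[OF effects_hermitian[OF A]])
    finally show ?thesis by (simp add: qform_diff qform_id algebra_simps)
  qed
  have "norm (id_blinfun - A) \<le> 1 - p"
  proof (rule norm_le_if_qform_le[OF _ _ qA])
    show "hermitian (id_blinfun - A)" by (intro hermitian_diff hermitian_id effects_hermitian[OF A])
    show "0 \<le> qform (id_blinfun - A) x" for x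
      using effects_qform_le[OF A] by (simp add: qform_diff qform_id)
    show "0 \<le> 1 - p" using sum norm_ge_zero[of "id_blinfun - (A o\<^sub>L (id_blinfun - A))"]
      unfolding p_def by linarith
  qed
  then show ?thesis using complement by (simp add: p_def)
qed

section \<open>The sharpness measure S1\<close>

lemma S1_scaleR_id:
  assumes "0 \<le> l" "l \<le> 1"
  shows "S1 (l *\<^sub>R (id_blinfun :: 'a::chilbert_space \<Rightarrow>\<^sub>L 'a)) = 0"
proof -
  let ?I = "id_blinfun :: 'a \<Rightarrow>\<^sub>L 'a"
  have "?I - l *\<^sub>R ?I = (1 - l) *\<^sub>R ?I"
    and "l *\<^sub>R ?I o\<^sub>L (1 - l) *\<^sub>R ?I = (l * (1 - l)) *\<^sub>R ?I"
    and "?I - (l * (1 - l)) *\<^sub>R ?I = (1 - l * (1 - l)) *\<^sub>R ?I"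
    by (auto intro!: blinfun_eqI simp: blinfun.diff_left blinfun.scaleR_left scaleR_diff_left
        scaleR_diff_right right_diff_distrib)
  then have "S1 (l *\<^sub>R ?I) = (l * norm ?I + (1 - l) * norm ?I - 1)
      - (\<bar>l * (1 - l)\<bar> * norm ?I + \<bar>1 - l * (1 - l)\<bar> * norm ?I - 1)"
    using assms by (simp add: S1_def)
  also have "\<dots> = 0"
  proof -
    have "0 \<le> l * (1 - l)" "0 \<le> 1 - l * (1 - l)" using assms mult_le_one[of l "1 - l"] by auto
    then show ?thesis by (simp only: abs_of_nonneg) (simp add: algebra_simps)
  qed
  finally show ?thesis .
qed

lemma S1_trivial_space:
  assumes "\<And>x::'a::chilbert_space. x = 0"
  shows "S1 (A :: 'a \<Rightarrow>\<^sub>L 'a) = 0"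
proof -
  have "A = 0" "id_blinfun = (0 :: 'a \<Rightarrow>\<^sub>L 'a)" using assms by (simp_all add: blinfun_trivial_domain)
  then show ?thesis by (simp add: S1_def)
qed

lemma S1_bounds:
  fixes A :: "'a::chilbert_space \<Rightarrow>\<^sub>L 'a"
  assumes A: "A \<in> effects"
  shows "0 \<le> S1 A \<and> S1 A \<le> 1"
proof (cases "\<exists>x::'a. x \<noteq> 0")
  case True
  then obtain x :: 'a where "x \<noteq> 0" by blast
  define m where "m = 1 - norm (id_blinfun - A)"
  have "0 \<le> m" "norm A \<le> 1"
    using effects_norm_le_one[OF A] effects_norm_le_one[OF effects_complement[OF A]]
    by (simp_all add: m_def)
  moreover have "m \<le> norm A"
    using norm_add_norm_complement_ge_one[OF \<open>x \<noteq> 0\<close>, of A] by (simp add: m_def)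
  moreover have "1 \<le> norm (A o\<^sub>L (id_blinfun - A)) + norm (id_blinfun - (A o\<^sub>L (id_blinfun - A)))"
    by (rule norm_add_norm_complement_ge_one[OF \<open>x \<noteq> 0\<close>])
  ultimately show ?thesis
    using effect_unsharpness_norm_le[OF A, folded m_def] parabola_oscillation_le[of m "norm A"]
    unfolding S1_def m_def by linarith
qed (simp add: S1_trivial_space)

lemma S1_eq_0_iff:
  fixes A :: "'a::chilbert_space \<Rightarrow>\<^sub>L 'a"
  assumes A: "A \<in> effects"
  shows "S1 A = 0 \<longleftrightarrow> trivial_effect A"
proof
  assume S0: "S1 A = 0"
  show "trivial_effect A"
  proof (cases "\<exists>x::'a. x \<noteq> 0")
    case True
    then obtain x :: 'a where "x \<noteq> 0" by blast
    define m where "m = 1 - norm (id_blinfun - A)"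
    have m: "0 \<le> m" "m \<le> 1" and M: "norm A \<le> 1"
      using effects_norm_le_one[OF A] effects_norm_le_one[OF effects_complement[OF A]]
      by (simp_all add: m_def)
    have "\<not> m < norm A"
      using S0 effect_unsharpness_norm_le[OF A] parabola_oscillation_less[OF m(1) _ M]
      unfolding S1_def m_def by fastforce
    then have "m = norm A"
      using norm_add_norm_complement_ge_one[OF \<open>x \<noteq> 0\<close>, of A] unfolding m_def by linarith
    then have "A = m *\<^sub>R id_blinfun"
      using qform_ge_norm_complement[of A] qform_le_norm[of A]
      by (intro hermitian_eq_scaleR_id effects_hermitian[OF A] order_antisym) (simp_all add: m_def)
    then show ?thesis using m by (auto simp: trivial_effect_def)
  next
    case False
    then have "A = 0 *\<^sub>R id_blinfun" by (simp add: blinfun_trivial_domain)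
    then show ?thesis by (auto simp: trivial_effect_def)
  qed
next
  assume "trivial_effect A"
  then show "S1 A = 0" by (auto simp: trivial_effect_def S1_scaleR_id)
qed

lemma S1_eq_1_iff:
  fixes A :: "'a::chilbert_space \<Rightarrow>\<^sub>L 'a"
  assumes A: "A \<in> effects"
  shows "S1 A = 1 \<longleftrightarrow> nontrivial_projection A"
proof (cases "\<exists>x::'a. x \<noteq> 0")
  case True
  then obtain x :: 'a where "x \<noteq> 0" by blast
  have norms: "norm A \<le> 1" "norm (id_blinfun - A) \<le> 1"
    using effects_norm_le_one[OF A] effects_norm_le_one[OF effects_complement[OF A]] by simp_all
  have sum: "1 \<le> norm (A o\<^sub>L (id_blinfun - A)) + norm (id_blinfun - (A o\<^sub>L (id_blinfun - A)))"
    by (rule norm_add_norm_complement_ge_one[OF \<open>x \<noteq> 0\<close>])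
  have idem: "A o\<^sub>L A = A \<longleftrightarrow> A o\<^sub>L (id_blinfun - A) = 0"
    by (auto simp: unsharpness_eq)
  show ?thesis
  proof
    assume "S1 A = 1"
    then have "norm A = 1" "norm (id_blinfun - A) = 1"
      and "norm (A o\<^sub>L (id_blinfun - A)) + norm (id_blinfun - (A o\<^sub>L (id_blinfun - A))) \<le> 1"
      using norms sum by (simp_all add: S1_def)
    then have "A o\<^sub>L (id_blinfun - A) = 0" "A \<noteq> 0" "A \<noteq> id_blinfun"
      using effect_unsharpness_eq_0[OF A] by auto
    then show "nontrivial_projection A"
      using A idem by (simp add: nontrivial_projection_def projection_def effects_def)
  next
    assume "nontrivial_projection A"
    then have AA: "A o\<^sub>L A = A" and "A \<noteq> 0" "A \<noteq> id_blinfun"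
      by (auto simp: nontrivial_projection_def projection_def)
    have "(id_blinfun - A) o\<^sub>L (id_blinfun - A) = id_blinfun - A"
    proof (rule blinfun_eqI)
      fix y
      have "A (A y) = A y" using AA by (metis blinfun_apply_blinfun_compose)
      then show "((id_blinfun - A) o\<^sub>L (id_blinfun - A)) y = (id_blinfun - A) y"
        by (simp add: blinfun.diff_left blinfun.diff_right)
    qed
    then have "norm (id_blinfun - A) = 1"
      using \<open>A \<noteq> id_blinfun\<close> norms(2) by (intro norm_idempotent) auto
    moreover have "norm A = 1" using AA \<open>A \<noteq> 0\<close> norms(1) by (rule norm_idempotent)
    moreover have "A o\<^sub>L (id_blinfun - A) = 0" using AA idem by simp
    ultimately show "S1 A = 1" using norm_id_blinfun_nontrivial[OF \<open>x \<noteq> 0\<close>] by (simp add: S1_def)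
  qed
next
  case False
  then show ?thesis
    by (simp add: S1_trivial_space nontrivial_projection_def blinfun_trivial_domain[where 'a = 'a and 'b = 'a])
qed

lemma S1_complement: "S1 (id_blinfun - A) = S1 A"
proof -
  have "(id_blinfun - A) o\<^sub>L A = A o\<^sub>L (id_blinfun - A)"
    by (rule blinfun_eqI) (simp add: blinfun.diff_left blinfun.diff_right)
  then show ?thesis by (simp add: S1_def)
qed

lemma op_inverse_eqI:
  assumes "bounded_op D" "C o\<^sub>L D = id_blinfun" "D o\<^sub>L C = id_blinfun"
  shows "op_inverse C = D"
  unfolding op_inverse_def
proof (rule the_equality)
  fix D' assume D': "bounded_op D' \<and> C o\<^sub>L D' = id_blinfun \<and> D' o\<^sub>L C = id_blinfun"
  show "D' = D"
  proof (rule blinfun_eqI)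
    fix y
    have "D' (C z) = z" for z using D' by (metis blinfun_apply_blinfun_compose blinfun_apply_id_blinfun)
    moreover have "C (D y) = y" using assms(2) by (metis blinfun_apply_blinfun_compose blinfun_apply_id_blinfun)
    ultimately show "D' y = D y" by metis
  qed
qed (use assms in simp)

lemma S1_similar:
  fixes A C D :: "'a::chilbert_space \<Rightarrow>\<^sub>L 'a"
  assumes A: "A \<in> effects" and A': "C o\<^sub>L A o\<^sub>L D \<in> effects"
    and CD: "C o\<^sub>L D = id_blinfun" and DC: "D o\<^sub>L C = id_blinfun"
  shows "S1 (C o\<^sub>L A o\<^sub>L D) = S1 A"
proof -
  define A' where "A' = C o\<^sub>L A o\<^sub>L D"
  have cd: "C (D y) = y" and dc: "D (C y) = y" for y
    using arg_cong[OF CD, of "\<lambda>F. F y"] arg_cong[OF DC, of "\<lambda>F. F y"] by simp_all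
  have hA: "hermitian A" and hA': "hermitian A'"
    using effects_hermitian A A' by (auto simp: A'_def)
  have "id_blinfun - A' = C o\<^sub>L (id_blinfun - A) o\<^sub>L D"
    and unsharp: "A' o\<^sub>L (id_blinfun - A') = C o\<^sub>L (A o\<^sub>L (id_blinfun - A)) o\<^sub>L D"
    by (auto intro!: blinfun_eqI simp: A'_def blinfun.diff_left blinfun.diff_right cd dc)
  moreover from unsharp have "id_blinfun - (A' o\<^sub>L (id_blinfun - A'))
      = C o\<^sub>L (id_blinfun - (A o\<^sub>L (id_blinfun - A))) o\<^sub>L D"
    by (auto intro!: blinfun_eqI simp: blinfun.diff_left blinfun.diff_right cd)
  ultimately show ?thesis
    unfolding A'_def[symmetric] S1_def
    by (metis A'_def hermitian_similar_norm_eq[OF _ _ CD DC] hA hA' hermitian_diff hermitian_id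
        hermitian_unsharpness)
qed

lemma S1_similarity_invariant:
  fixes A :: "'a::chilbert_space \<Rightarrow>\<^sub>L 'a"
  assumes "A \<in> effects" "invertible_op C" "C o\<^sub>L A o\<^sub>L op_inverse C \<in> effects"
  shows "S1 (C o\<^sub>L A o\<^sub>L op_inverse C) = S1 A"
proof -
  obtain D where "bounded_op D" "C o\<^sub>L D = id_blinfun" "D o\<^sub>L C = id_blinfun"
    using \<open>invertible_op C\<close> by (auto simp: invertible_op_def)
  then show ?thesis using assms S1_similar by (simp add: op_inverse_eqI)
qed

lemma continuous_on_S1: "continuous_on X S1"
  unfolding S1_def by (intro continuous_intros)

theorem mainTheorem10:
  assumes "separable_hilbert TYPE('a::chilbert_space)"
  shows "sharpness_measure (S1 :: ('a \<Rightarrow>\<^sub>L 'a) \<Rightarrow> real)"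
  unfolding sharpness_measure_def
  using S1_bounds S1_eq_0_iff S1_eq_1_iff S1_complement S1_similarity_invariant continuous_on_S1
  by blast

end
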